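(* Let $(\mathfrak{A},\varphi,\tau)$ be an ergodic $*$-dynamical system, and let $A,B\in\mathfrak{A}$ and $\varepsilon>0$. Then the set $$E=\left\{k\in\mathbb{N}:\left|\varphi\left(A\tau^{k}(B)\right)\right|>\left|\varphi(A)\varphi(B)\right|-\varepsilon\right\}$$ is relatively dense in $\mathbb{N}=\{1,2,3,\dots\}$.
   Context: All algebras are over $\mathbb{C}$. A unital $*$-algebra is a complex algebra with an involution $*$ and a unit $1$. A state on a unital $*$-algebra $\mathfrak{A}$ is a linear functional $\varphi$ with $\varphi(A^*A)\ge 0$ for all $A$ and $\varphi(1)=1$. A $*$-dynamical system is a triple $(\mathfrak{A},\varphi,\tau)$ where $\mathfrak{A}$ is a unital $*$-algebra, $\varphi$ is a state on $\mathfrak{A}$, and $\tau:\mathfrak{A}\to\mathfrak{A}$ is a linear map (not necessarily multiplicative) with $\tau(1)=1$ and $\varphi(\tau(A)^*\tau(A))\le\varphi(A^*A)$ for all $A\in\mathfrak{A}$. Define the seminorm $\|A\|_\varphi=\sqrt{\varphi(A^*A)}$; scalars $\alpha\in\mathbb{C}$ are identified with $\alpha 1\in\mathfrak{A}$. The system is called ergodic if: for every sequence $(A_n)$ in $\mathfrak{A}$ such that $\|\tau(A_n)-A_n\|_\varphi\to0$ and such that for every $\varepsilon>0$ there is $N$ with $\|A_m-A_n\|_\varphi\le\varepsilon$ for all $m,n>N$, there exists $\alpha\in\mathbb{C}$ with $\|A_n-\alpha\|_\varphi\to0$. A set $E\subseteq\mathbb{N}$ is relatively dense in $\mathbb{N}$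 if there exists $n\in\mathbb{N}$ such that $E\cap\{j,j+1,\dots,j+n-1\}\neq\emptyset$ for every $j\in\mathbb{N}$. *)

theory Defs
  imports "HOL-Analysis.Analysis"
begin

text \<open>A unital *-algebra over the complex numbers is modelled as a type 'a of class
ring_1 (unit 1, multiplication, addition), together with a complex scalar
multiplication sc (making 'a a complex vector space, with multiplication bilinear)
and an involution st (conjugate-linear, anti-multiplicative, involutive).\<close>

definition unital_star_algebra ::
  "(complex \<Rightarrow> 'a::ring_1 \<Rightarrow> 'a) \<Rightarrow> ('a \<Rightarrow> 'a) \<Rightarrow> bool" where
  "unital_star_algebra sc st \<longleftrightarrow>
     Vector_Spaces.vector_space sc \<and>
     (\<forall>c a b. sc c (a * b) = sc c a * b) \<and>
     (\<forall>c a b. sc c (a * b) = a * sc c b) \<and>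
     (\<forall>a. st (st a) = a) \<and>
     (\<forall>a b. st (a + b) = st a + st b) \<and>
     (\<forall>c a. st (sc c a) = sc (cnj c) (st a)) \<and>
     (\<forall>a b. st (a * b) = st b * st a)"

definition is_state ::
  "(complex \<Rightarrow> 'a::ring_1 \<Rightarrow> 'a) \<Rightarrow> ('a \<Rightarrow> 'a) \<Rightarrow> ('a \<Rightarrow> complex) \<Rightarrow> bool" where
  "is_state sc st \<phi> \<longleftrightarrow>
     (\<forall>a b. \<phi> (a + b) = \<phi> a + \<phi> b) \<and>
     (\<forall>c a. \<phi> (sc c a) = c * \<phi> a) \<and>
     (\<forall>a. Im (\<phi> (st a * a)) = 0 \<and> Re (\<phi> (st a * a)) \<ge> 0) \<and>
     \<phi> 1 = 1"

definition phi_norm :: "('a::ring_1 \<Rightarrow> 'a) \<Rightarrow> ('a \<Rightarrow> complex) \<Rightarrow> 'a \<Rightarrow> real" where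
  "phi_norm st \<phi> a = sqrt (Re (\<phi> (st a * a)))"

definition star_dynamical_system ::
  "(complex \<Rightarrow> 'a::ring_1 \<Rightarrow> 'a) \<Rightarrow> ('a \<Rightarrow> 'a) \<Rightarrow> ('a \<Rightarrow> complex) \<Rightarrow> ('a \<Rightarrow> 'a) \<Rightarrow> bool" where
  "star_dynamical_system sc st \<phi> \<tau> \<longleftrightarrow>
     unital_star_algebra sc st \<and> is_state sc st \<phi> \<and>
     (\<forall>a b. \<tau> (a + b) = \<tau> a + \<tau> b) \<and>
     (\<forall>c a. \<tau> (sc c a) = sc c (\<tau> a)) \<and>
     \<tau> 1 = 1 \<and>
     (\<forall>a. Re (\<phi> (st (\<tau> a) * \<tau> a)) \<le> Re (\<phi> (st a * a)))"

definition ergodic ::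
  "(complex \<Rightarrow> 'a::ring_1 \<Rightarrow> 'a) \<Rightarrow> ('a \<Rightarrow> 'a) \<Rightarrow> ('a \<Rightarrow> complex) \<Rightarrow> ('a \<Rightarrow> 'a) \<Rightarrow> bool" where
  "ergodic sc st \<phi> \<tau> \<longleftrightarrow>
     star_dynamical_system sc st \<phi> \<tau> \<and>
     (\<forall>As :: nat \<Rightarrow> 'a.
        ((\<lambda>n. phi_norm st \<phi> (\<tau> (As n) - As n)) \<longlonglongrightarrow> 0) \<and>
        (\<forall>e>0. \<exists>N. \<forall>m n. m > N \<and> n > N \<longrightarrow> phi_norm st \<phi> (As m - As n) \<le> e)
        \<longrightarrow> (\<exists>\<alpha>::complex. (\<lambda>n. phi_norm st \<phi> (As n - sc \<alpha> 1)) \<longlonglongrightarrow> 0))"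

definition relatively_dense :: "nat set \<Rightarrow> bool" where
  "relatively_dense E \<longleftrightarrow> (\<exists>n\<ge>1. \<forall>j\<ge>1. E \<inter> {j..<j+n} \<noteq> {})"

end

theory Submission
  imports Defs
begin

(* The orbit averages of B (dyadic convex combinations of tau B, ..., tau^N B) form a
   midpoint-convex set. A sequence of such averages minimizing the seminorm is Cauchy by the
   parallelogram law, and since tau maps averages to averages without increasing the seminorm,
   it is asymptotically tau-invariant. Ergodicity makes it converge to a scalar, which must be
   phi B because phi is tau-invariant. Hence some average X of tau B, ..., tau^N B is within
   delta of phi B, so by Cauchy-Schwarz and contractivity phi (A tau^j X) is within epsilon of
   phi A phi B for every j. As phi (A tau^j X) is an average of the values
   phi (A tau^(j+k) B) with 1 <= k <= N, one of them has modulus greater than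
   |phi A phi B| - epsilon, so the set meets every window of length N. *)

lemma minimizing_sequence:
  fixes f :: "'a \<Rightarrow> real"
  assumes "S \<noteq> {}" and "bdd_below (f ` S)"
  obtains Y where "\<And>m. Y m \<in> S" and "(\<lambda>m. f (Y m)) \<longlonglongrightarrow> (INF x\<in>S. f x)"
proof -
  have "\<exists>x\<in>S. f x < (INF x\<in>S. f x) + inverse (real (Suc m))" for m
    using assms by (subst cINF_less_iff[symmetric]) auto
  then obtain Y where Y: "\<And>m. Y m \<in> S"
    and below: "\<And>m. f (Y m) < (INF x\<in>S. f x) + inverse (real (Suc m))"
    by metis
  have "(\<lambda>m. f (Y m)) \<longlonglongrightarrow> (INF x\<in>S. f x)"
  proof (rule tendsto_sandwich[OF _ _ tendsto_const LIMSEQ_inverse_real_of_nat_add])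
    show "\<forall>\<^sub>F m in sequentially. (INF x\<in>S. f x) \<le> f (Y m)"
      using assms(2) Y by (simp add: cINF_lower)
    show "\<forall>\<^sub>F m in sequentially. f (Y m) \<le> (INF x\<in>S. f x) + inverse (real (Suc m))"
      using below by (simp add: less_imp_le)
  qed
  with Y show thesis by (rule that)
qed

locale positive_sesquilinear_form =
  fixes sc :: "complex \<Rightarrow> 'a::ab_group_add \<Rightarrow> 'a" and ip :: "'a \<Rightarrow> 'a \<Rightarrow> complex"
  assumes ip_add_left: "ip (a + b) c = ip a c + ip b c"
    and ip_add_right: "ip a (b + c) = ip a b + ip a c"
    and ip_scale_left: "ip (sc k a) b = cnj k * ip a b"
    and ip_scale_right: "ip a (sc k b) = k * ip a b"
    and ip_self_real: "Im (ip a a) = 0"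
    and ip_self_nonneg: "0 \<le> Re (ip a a)"
begin

lemma ip_diff_left: "ip (a - b) c = ip a c - ip b c"
  by (rule additive.diff) (simp add: Modules.additive_def ip_add_left)

lemma ip_diff_right: "ip a (b - c) = ip a b - ip a c"
  by (rule additive.diff) (simp add: Modules.additive_def ip_add_right)

lemmas ip_simps [simp] =
  ip_add_left ip_add_right ip_diff_left ip_diff_right ip_scale_left ip_scale_right

definition quad :: "'a \<Rightarrow> real" where
  "quad a = Re (ip a a)"

lemma ip_self: "ip a a = of_real (quad a)"
  using ip_self_real[of a] by (simp add: quad_def complex_eq_iff)

lemma quad_nonneg: "0 \<le> quad a"
  by (simp add: quad_def ip_self_nonneg)

text \<open>Hermitian symmetry need not be assumed: it follows by polarization from the
  reality of \<open>ip a a\<close>.\<close>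
lemma ip_hermitian: "ip b a = cnj (ip a b)"
proof -
  have "Im (ip (a + b) (a + b)) = 0" "Im (ip (a + sc \<i> b) (a + sc \<i> b)) = 0"
    by (simp_all only: ip_self_real)
  then have "Im (ip a b + ip b a) = 0" "Re (ip a b - ip b a) = 0"
    using ip_self_real[of a] ip_self_real[of b] by (simp_all add: algebra_simps)
  then show ?thesis by (simp add: complex_eq_iff)
qed

lemma quad_add: "quad (a + b) = quad a + quad b + 2 * Re (ip a b)"
  using ip_hermitian[of a b] by (simp add: quad_def)

lemma quad_diff: "quad (a - b) = quad a + quad b - 2 * Re (ip a b)"
  using ip_hermitian[of a b] by (simp add: quad_def)

lemma quad_scale: "quad (sc k a) = (cmod k)\<^sup>2 * quad a"
proof -
  have "of_real (quad (sc k a)) = (k * cnj k) * ip a a"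
    by (simp add: ip_self[symmetric] mult.commute)
  also have "\<dots> = of_real ((cmod k)\<^sup>2 * quad a)"
    by (simp only: ip_self complex_norm_square[symmetric] of_real_mult)
  finally show ?thesis by (simp only: of_real_eq_iff)
qed

lemma quad_parallelogram: "quad (a - b) = 2 * quad a + 2 * quad b - 4 * quad (sc (1/2) (a + b))"
  by (simp add: quad_add quad_diff quad_scale power2_eq_square field_simps)

lemma Cauchy_Schwarz_squared: "(cmod (ip a b))\<^sup>2 \<le> quad a * quad b"
proof -
  define z where "z = ip a b"
  have ray: "0 \<le> quad a + t\<^sup>2 * (cmod z)\<^sup>2 * quad b - 2 * t * (cmod z)\<^sup>2" for t :: real
  proof -
    have "Re (- (of_real t * cnj z) * z) = - t * (cmod z)\<^sup>2"
      unfolding cmod_power2 by (simp add: algebra_simps power2_eq_square)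
    moreover have "(cmod (- (of_real t * cnj z)))\<^sup>2 = t\<^sup>2 * (cmod z)\<^sup>2"
      by (simp add: norm_mult power_mult_distrib)
    ultimately have "quad (a + sc (- (of_real t * cnj z)) b)
        = quad a + t\<^sup>2 * (cmod z)\<^sup>2 * quad b - 2 * t * (cmod z)\<^sup>2"
      by (simp only: quad_add quad_scale ip_scale_right z_def)
    then show ?thesis using quad_nonneg by metis
  qed
  show ?thesis
  proof (cases "quad b = 0")
    case True
    have "(cmod z)\<^sup>2 = 0"
    proof (rule ccontr)
      assume "(cmod z)\<^sup>2 \<noteq> 0"
      then have "(cmod z)\<^sup>2 > 0" by simp
      with ray[of "(quad a + 1) / (2 * (cmod z)\<^sup>2)"] True show False by simp
    qed
    with True show ?thesis by (simp add: z_def)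
  next
    case False
    then have "quad b > 0" using quad_nonneg[of b] by simp
    with ray[of "1 / quad b"] show ?thesis
      by (simp add: z_def power2_eq_square field_simps)
  qed
qed

lemma Cauchy_Schwarz: "cmod (ip a b) \<le> sqrt (quad a) * sqrt (quad b)"
  using Cauchy_Schwarz_squared[of a b] by (simp add: real_le_rsqrt real_sqrt_mult[symmetric])

context
  fixes C :: "'a set" and D :: real
  assumes midpoint_closed: "\<And>X Y. X \<in> C \<Longrightarrow> Y \<in> C \<Longrightarrow> sc (1/2) (X + Y) \<in> C"
    and quad_lower: "\<And>X. X \<in> C \<Longrightarrow> D \<le> quad X"
begin

lemma quad_diff_le_excess:
  assumes "X \<in> C" and "Y \<in> C"
  shows "quad (X - Y) \<le> 2 * (quad X - D) + 2 * (quad Y - D)"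
  using quad_parallelogram[of X Y] quad_lower[OF midpoint_closed[OF assms]] by simp

lemma minimizing_sequence_Cauchy:
  assumes Y: "\<And>m. Y m \<in> C" and lim: "(\<lambda>m. quad (Y m)) \<longlonglongrightarrow> D"
  shows "\<forall>e>0. \<exists>N. \<forall>m n. m > N \<and> n > N \<longrightarrow> sqrt (quad (Y m - Y n)) \<le> e"
proof (intro allI impI)
  fix e :: real
  assume "e > 0"
  then have "D < D + e\<^sup>2 / 4" by simp
  from order_tendstoD(2)[OF lim this] obtain N where N: "\<And>m. m \<ge> N \<Longrightarrow> quad (Y m) < D + e\<^sup>2 / 4"
    by (auto simp: eventually_sequentially)
  have "sqrt (quad (Y m - Y n)) \<le> e" if "m > N" "n > N" for m n
  proof (rule real_le_lsqrt)
    show "quad (Y m - Y n) \<le> e\<^sup>2"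
      using quad_diff_le_excess[OF Y Y, of m n] N[of m] N[of n] that by simp
  qed (use \<open>e > 0\<close> in simp)
  then show "\<exists>N. \<forall>m n. m > N \<and> n > N \<longrightarrow> sqrt (quad (Y m - Y n)) \<le> e" by blast
qed

lemma minimizing_sequence_asymptotically_invariant:
  assumes T: "\<And>X. X \<in> C \<Longrightarrow> T X \<in> C" "\<And>X. quad (T X) \<le> quad X"
    and Y: "\<And>m. Y m \<in> C" and lim: "(\<lambda>m. quad (Y m)) \<longlonglongrightarrow> D"
  shows "(\<lambda>m. sqrt (quad (T (Y m) - Y m))) \<longlonglongrightarrow> 0"
proof (rule tendsto_sandwich[OF _ _ tendsto_const])
  show "\<forall>\<^sub>F m in sequentially. 0 \<le> sqrt (quad (T (Y m) - Y m))"
    by (simp add: quad_nonneg)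
  have "quad (T (Y m) - Y m) \<le> 4 * (quad (Y m) - D)" for m
    using quad_diff_le_excess[OF T(1)[OF Y] Y, of m m] T(2)[of "Y m"] by simp
  then show "\<forall>\<^sub>F m in sequentially. sqrt (quad (T (Y m) - Y m)) \<le> sqrt (4 * (quad (Y m) - D))"
    by simp
  show "(\<lambda>m. sqrt (4 * (quad (Y m) - D))) \<longlonglongrightarrow> 0"
    using tendsto_real_sqrt[OF tendsto_mult[OF tendsto_const tendsto_diff[OF lim tendsto_const]],
        of 4 D]
    by simp
qed

end

end

lemma ergodicE:
  assumes "ergodic sc st \<phi> \<tau>"
    and "(\<lambda>n. phi_norm st \<phi> (\<tau> (As n) - As n)) \<longlonglongrightarrow> 0"
    and "\<forall>e>0. \<exists>N. \<forall>m n. m > N \<and> n > N \<longrightarrow> phi_norm st \<phi> (As m - As n) \<le> e"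
  obtains \<alpha> where "(\<lambda>n. phi_norm st \<phi> (As n - sc \<alpha> 1)) \<longlonglongrightarrow> 0"
proof -
  from assms(1) have "(\<lambda>n. phi_norm st \<phi> (\<tau> (As n) - As n)) \<longlonglongrightarrow> 0
      \<and> (\<forall>e>0. \<exists>N. \<forall>m n. m > N \<and> n > N \<longrightarrow> phi_norm st \<phi> (As m - As n) \<le> e)
      \<longrightarrow> (\<exists>\<alpha>. (\<lambda>n. phi_norm st \<phi> (As n - sc \<alpha> 1)) \<longlonglongrightarrow> 0)"
    unfolding ergodic_def by (rule conjunct2[THEN spec])
  with assms(2,3) show thesis using that by blast
qed

locale star_dynamical =
  fixes sc :: "complex \<Rightarrow> 'a::ring_1 \<Rightarrow> 'a" and st :: "'a \<Rightarrow> 'a"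
    and \<phi> :: "'a \<Rightarrow> complex" and \<tau> :: "'a \<Rightarrow> 'a"
  assumes system: "star_dynamical_system sc st \<phi> \<tau>"
begin

lemma scale_mult_left: "sc c (a * b) = sc c a * b"
  and scale_mult_right: "sc c (a * b) = a * sc c b"
  and star_star [simp]: "st (st a) = a"
  and star_add: "st (a + b) = st a + st b"
  and star_scale [simp]: "st (sc c a) = sc (cnj c) (st a)"
  and star_mult [simp]: "st (a * b) = st b * st a"
  and phi_add: "\<phi> (a + b) = \<phi> a + \<phi> b"
  and phi_scale [simp]: "\<phi> (sc c a) = c * \<phi> a"
  and phi_star_mult_real: "Im (\<phi> (st a * a)) = 0"
  and phi_star_mult_nonneg: "0 \<le> Re (\<phi> (st a * a))"
  and phi_one [simp]: "\<phi> 1 = 1"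
  and tau_add: "\<tau> (a + b) = \<tau> a + \<tau> b"
  and tau_scale [simp]: "\<tau> (sc c a) = sc c (\<tau> a)"
  and tau_one [simp]: "\<tau> 1 = 1"
  and tau_contractive: "Re (\<phi> (st (\<tau> a) * \<tau> a)) \<le> Re (\<phi> (st a * a))"
  using system
  by (auto simp: star_dynamical_system_def unital_star_algebra_def is_state_def)

sublocale star: additive st by unfold_locales (rule star_add)
sublocale phi: additive \<phi> by unfold_locales (rule phi_add)

lemma tau_power_additive: "Modules.additive (\<tau> ^^ k)"
  by unfold_locales (induction k; simp add: tau_add)

lemmas [simp] = star.add star.diff phi.add phi.diff
  additive.add[OF tau_power_additive] additive.diff[OF tau_power_additive]

lemma star_one [simp]: "st 1 = 1"
  using star_mult[of "st 1" 1] by simp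

lemma tau_power_scale [simp]: "(\<tau> ^^ k) (sc c a) = sc c ((\<tau> ^^ k) a)"
  by (induction k) auto

lemma tau_power_one [simp]: "(\<tau> ^^ k) 1 = 1"
  by (induction k) auto

definition ip :: "'a \<Rightarrow> 'a \<Rightarrow> complex" where
  "ip a b = \<phi> (st a * b)"

sublocale positive_sesquilinear_form sc ip
  by unfold_locales
    (simp_all add: ip_def algebra_simps phi_star_mult_real phi_star_mult_nonneg
      flip: scale_mult_left scale_mult_right)

lemma ip_one_left [simp]: "ip 1 b = \<phi> b"
  by (simp add: ip_def)

lemma quad_one [simp]: "quad 1 = 1"
  by (simp add: quad_def)

lemma phi_norm_eq: "phi_norm st \<phi> a = sqrt (quad a)"
  by (simp add: phi_norm_def quad_def ip_def)

lemma phi_norm_nonneg: "0 \<le> phi_norm st \<phi> a"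
  by (simp add: phi_norm_eq quad_nonneg)

lemma quad_tau: "quad (\<tau> a) \<le> quad a"
  using tau_contractive by (simp add: quad_def ip_def)

lemma quad_tau_power: "quad ((\<tau> ^^ k) a) \<le> quad a"
  by (induction k) (auto intro: order_trans[OF quad_tau])

lemma norm_phi_le_phi_norm: "cmod (\<phi> a) \<le> phi_norm st \<phi> a"
  using Cauchy_Schwarz[of 1 a] by (simp add: phi_norm_eq)

text \<open>If \<open>w = \<phi> (\<tau> x) - \<phi> x \<noteq> 0\<close>, contractivity applied to \<open>1 + t x\<close> gives
  \<open>2 Re (t w) \<le> \<bar>t\<bar>\<^sup>2 (quad x - quad (\<tau> x))\<close>, which fails for \<open>t\<close> a small positive
  multiple of \<open>cnj w\<close>.\<close>
lemma phi_tau [simp]: "\<phi> (\<tau> x) = \<phi> x"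
proof (rule ccontr)
  assume "\<phi> (\<tau> x) \<noteq> \<phi> x"
  define w where "w = \<phi> (\<tau> x) - \<phi> x"
  define K where "K = quad x - quad (\<tau> x)"
  define s where "s = 1 / (K + 1)"
  define t where "t = of_real s * cnj w"
  have "K \<ge> 0" using quad_tau[of x] by (simp add: K_def)
  have w: "(cmod w)\<^sup>2 > 0" using \<open>\<phi> (\<tau> x) \<noteq> \<phi> x\<close> by (simp add: w_def)
  have s: "s > 0" "s * K < 1" using \<open>K \<ge> 0\<close> by (simp_all add: s_def)
  have "quad (\<tau> (1 + sc t x)) \<le> quad (1 + sc t x)" by (rule quad_tau)
  then have "2 * Re (t * w) \<le> (cmod t)\<^sup>2 * K"
    by (simp add: quad_add quad_scale w_def K_def algebra_simps tau_add)
  moreover have "Re (t * w) = s * (cmod w)\<^sup>2"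
    unfolding cmod_power2 by (simp add: t_def algebra_simps power2_eq_square)
  moreover have "(cmod t)\<^sup>2 = s\<^sup>2 * (cmod w)\<^sup>2"
    by (simp add: t_def norm_mult power_mult_distrib)
  ultimately have "(s * (cmod w)\<^sup>2) * 2 \<le> (s * (cmod w)\<^sup>2) * (s * K)"
    by (simp add: power2_eq_square algebra_simps)
  then have "2 \<le> s * K" using w s by (meson mult_left_le_imp_le mult_pos_pos)
  with s show False by simp
qed

lemma phi_tau_power [simp]: "\<phi> ((\<tau> ^^ k) x) = \<phi> x"
  by (induction k) auto

lemma scalar_limit_eq_phi:
  assumes "\<And>n. \<phi> (Y n) = c"
    and "(\<lambda>n. phi_norm st \<phi> (Y n - sc \<alpha> 1)) \<longlonglongrightarrow> 0"
  shows "\<alpha> = c"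
proof -
  have "cmod (c - \<alpha>) \<le> phi_norm st \<phi> (Y n - sc \<alpha> 1)" for n
    using norm_phi_le_phi_norm[of "Y n - sc \<alpha> 1"] assms(1) by simp
  then have "cmod (c - \<alpha>) \<le> 0"
    using assms(2) by (intro LIMSEQ_le_const[of _ 0]) auto
  then show ?thesis by simp
qed

inductive orbit_average :: "'a \<Rightarrow> nat \<Rightarrow> 'a \<Rightarrow> bool" for B where
  iterate: "1 \<le> k \<Longrightarrow> k \<le> n \<Longrightarrow> orbit_average B n ((\<tau> ^^ k) B)"
| midpoint: "orbit_average B n X \<Longrightarrow> orbit_average B n Y \<Longrightarrow> orbit_average B n (sc (1/2) (X + Y))"

lemma orbit_average_phi: "orbit_average B n X \<Longrightarrow> \<phi> X = \<phi> B"
  by (induction rule: orbit_average.induct) (auto simp: field_simps)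

lemma orbit_average_mono: "orbit_average B n X \<Longrightarrow> n \<le> m \<Longrightarrow> orbit_average B m X"
  by (induction rule: orbit_average.induct) (auto intro: orbit_average.intros)

lemma orbit_average_tau: "orbit_average B n X \<Longrightarrow> orbit_average B (Suc n) (\<tau> X)"
proof (induction rule: orbit_average.induct)
  case (iterate k n)
  then have "orbit_average B (Suc n) ((\<tau> ^^ Suc k) B)" by (intro orbit_average.iterate) auto
  then show ?case by simp
next
  case (midpoint n X Y)
  then show ?case using orbit_average.midpoint by (fastforce simp: tau_add)
qed

lemma orbit_average_dominated:
  assumes "orbit_average B n X"
  shows "\<exists>k. 1 \<le> k \<and> k \<le> n \<and>
           cmod (\<phi> (A * (\<tau> ^^ j) X)) \<le> cmod (\<phi> (A * (\<tau> ^^ (k + j)) B))"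
  using assms
proof (induction rule: orbit_average.induct)
  case (iterate k n)
  have "(\<tau> ^^ j) ((\<tau> ^^ k) B) = (\<tau> ^^ (k + j)) B"
    by (simp add: funpow_add add.commute)
  with iterate show ?case by auto
next
  case (midpoint n X Y)
  let ?c = "\<lambda>X. cmod (\<phi> (A * (\<tau> ^^ j) X))" and ?b = "\<lambda>k. cmod (\<phi> (A * (\<tau> ^^ (k + j)) B))"
  obtain k1 k2 where k: "1 \<le> k1" "k1 \<le> n" "?c X \<le> ?b k1" "1 \<le> k2" "k2 \<le> n" "?c Y \<le> ?b k2"
    using midpoint.IH by blast
  have "\<phi> (A * (\<tau> ^^ j) (sc (1/2) (X + Y))) = (\<phi> (A * (\<tau> ^^ j) X) + \<phi> (A * (\<tau> ^^ j) Y)) / 2"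
    by (simp add: distrib_left flip: scale_mult_right)
  then have "?c (sc (1/2) (X + Y)) \<le> (?c X + ?c Y) / 2"
    by (simp only: norm_divide) (simp add: norm_triangle_ineq divide_right_mono)
  also have "\<dots> \<le> max (?b k1) (?b k2)"
    using k by simp
  finally show ?case using k by (auto simp: max_def split: if_splits)
qed

lemma relatively_dense_from_orbit_average:
  assumes "orbit_average B N X" and "\<And>j. c < cmod (\<phi> (A * (\<tau> ^^ j) X))"
  shows "relatively_dense {k. k \<ge> 1 \<and> c < cmod (\<phi> (A * (\<tau> ^^ k) B))}"
  unfolding relatively_dense_def
proof (intro exI[of _ N] conjI allI impI)
  show "1 \<le> N" using orbit_average_dominated[OF assms(1)] by fastforce
  fix j :: nat
  assume "1 \<le> j"
  obtain k where "1 \<le> k" "k \<le> N"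
    and "cmod (\<phi> (A * (\<tau> ^^ (j - 1)) X)) \<le> cmod (\<phi> (A * (\<tau> ^^ (k + (j - 1))) B))"
    using orbit_average_dominated[OF assms(1)] by blast
  with assms(2)[of "j - 1"] \<open>1 \<le> j\<close>
  have "k + (j - 1) \<in> {k. k \<ge> 1 \<and> c < cmod (\<phi> (A * (\<tau> ^^ k) B))} \<inter> {j..<j + N}"
    by auto
  then show "{k. k \<ge> 1 \<and> c < cmod (\<phi> (A * (\<tau> ^^ k) B))} \<inter> {j..<j + N} \<noteq> {}"
    by blast
qed

lemma orbit_average_near_mean:
  assumes "ergodic sc st \<phi> \<tau>" and "\<delta> > 0"
  obtains N X where "orbit_average B N X" and "phi_norm st \<phi> (X - sc (\<phi> B) 1) < \<delta>"
proof -
  define C where "C = {X. \<exists>n. orbit_average B n X}"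
  define D where "D = (INF X\<in>C. quad X)"
  have "orbit_average B 1 ((\<tau> ^^ 1) B)" by (rule orbit_average.iterate) auto
  then have "C \<noteq> {}" by (auto simp: C_def)
  have bdd: "bdd_below (quad ` C)" by (rule bdd_belowI2[of _ 0]) (rule quad_nonneg)
  have mid: "sc (1/2) (X + Y) \<in> C" if "X \<in> C" "Y \<in> C" for X Y
  proof -
    from that obtain m n where "orbit_average B m X" "orbit_average B n Y" by (auto simp: C_def)
    then have "orbit_average B (max m n) X" "orbit_average B (max m n) Y"
      by (meson orbit_average_mono max.cobounded1 max.cobounded2)+
    then show ?thesis by (auto simp: C_def intro: orbit_average.midpoint)
  qed
  have lower: "D \<le> quad X" if "X \<in> C" for X
    unfolding D_def using bdd that by (rule cINF_lower)
  have tau_C: "\<tau> X \<in> C" if "X \<in> C" for X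
    using that orbit_average_tau unfolding C_def by blast
  obtain Y where Y: "\<And>m. Y m \<in> C" and lim: "(\<lambda>m. quad (Y m)) \<longlonglongrightarrow> D"
    using minimizing_sequence[OF \<open>C \<noteq> {}\<close> bdd] unfolding D_def by blast
  have "(\<lambda>n. phi_norm st \<phi> (\<tau> (Y n) - Y n)) \<longlonglongrightarrow> 0"
    unfolding phi_norm_eq using mid lower tau_C quad_tau Y lim
    by (rule minimizing_sequence_asymptotically_invariant)
  moreover have "\<forall>e>0. \<exists>N. \<forall>m n. m > N \<and> n > N \<longrightarrow> phi_norm st \<phi> (Y m - Y n) \<le> e"
    unfolding phi_norm_eq using mid lower Y lim by (rule minimizing_sequence_Cauchy)
  ultimately obtain \<alpha> where \<alpha>: "(\<lambda>n. phi_norm st \<phi> (Y n - sc \<alpha> 1)) \<longlonglongrightarrow> 0"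
    by (rule ergodicE[OF assms(1)])
  have "\<phi> (Y n) = \<phi> B" for n
    using Y[of n] orbit_average_phi unfolding C_def by blast
  then have "\<alpha> = \<phi> B" using \<alpha> by (rule scalar_limit_eq_phi)
  with eventually_happens'[OF sequentially_bot order_tendstoD(2)[OF \<alpha> \<open>\<delta> > 0\<close>]]
  obtain n where "phi_norm st \<phi> (Y n - sc (\<phi> B) 1) < \<delta>"
    by blast
  moreover obtain N where "orbit_average B N (Y n)" using Y[of n] unfolding C_def by blast
  ultimately show thesis by (rule that[rotated])
qed

lemma correlation_near_product:
  "cmod (\<phi> (A * (\<tau> ^^ j) X) - \<phi> A * \<phi> B)
     \<le> phi_norm st \<phi> (st A) * phi_norm st \<phi> (X - sc (\<phi> B) 1)"
proof -
  let ?Z = "X - sc (\<phi> B) 1"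
  have "A * sc (\<phi> B) 1 = sc (\<phi> B) A"
    using scale_mult_right[of "\<phi> B" A 1] by simp
  then have "\<phi> (A * (\<tau> ^^ j) X) - \<phi> A * \<phi> B = ip (st A) ((\<tau> ^^ j) ?Z)"
    by (simp add: ip_def right_diff_distrib mult.commute)
  then have "cmod (\<phi> (A * (\<tau> ^^ j) X) - \<phi> A * \<phi> B)
      \<le> sqrt (quad (st A)) * sqrt (quad ((\<tau> ^^ j) ?Z))"
    by (simp only: Cauchy_Schwarz)
  also have "\<dots> \<le> sqrt (quad (st A)) * sqrt (quad ?Z)"
    by (intro mult_left_mono real_sqrt_le_mono quad_tau_power) (simp add: quad_nonneg)
  finally show ?thesis by (simp only: phi_norm_eq)
qed

end

theorem theorem4p2:
  fixes sc :: "complex \<Rightarrow> 'a::ring_1 \<Rightarrow> 'a" and st :: "'a \<Rightarrow> 'a"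
    and \<phi> :: "'a \<Rightarrow> complex" and \<tau> :: "'a \<Rightarrow> 'a"
    and A B :: 'a and \<epsilon> :: real
  assumes "ergodic sc st \<phi> \<tau>" and "\<epsilon> > 0"
  shows "relatively_dense
           {k::nat. k \<ge> 1 \<and> cmod (\<phi> (A * (\<tau> ^^ k) B)) > cmod (\<phi> A * \<phi> B) - \<epsilon>}"
proof -
  interpret star_dynamical sc st \<phi> \<tau>
    using assms(1) by unfold_locales (simp add: ergodic_def)
  define a where "a = phi_norm st \<phi> (st A)"
  have "a \<ge> 0" by (simp add: a_def phi_norm_nonneg)
  with assms(2) have "\<epsilon> / (a + 1) > 0" by simp
  with assms(1) obtain N X where X: "orbit_average B N X"
    and close: "phi_norm st \<phi> (X - sc (\<phi> B) 1) < \<epsilon> / (a + 1)"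
    by (rule orbit_average_near_mean)
  have "cmod (\<phi> A * \<phi> B) - \<epsilon> < cmod (\<phi> (A * (\<tau> ^^ j) X))" for j
  proof -
    have "cmod (\<phi> (A * (\<tau> ^^ j) X) - \<phi> A * \<phi> B) \<le> a * (\<epsilon> / (a + 1))"
      using correlation_near_product[of A j X B] mult_left_mono[OF less_imp_le[OF close] \<open>a \<ge> 0\<close>]
      unfolding a_def by (rule order_trans)
    also have "\<dots> < \<epsilon>" using \<open>a \<ge> 0\<close> assms(2) by (simp add: field_simps)
    finally show ?thesis using norm_triangle_ineq3[of "\<phi> (A * (\<tau> ^^ j) X)" "\<phi> A * \<phi> B"] by linarith
  qed
  with X show ?thesis by (rule relatively_dense_from_orbit_average)
qed

end
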